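(* Let $v$ and $v'$ be distinct true twin vertices of a graph $G$ and let $G'=G-v'$. Then $\tilde\gamma_{gr}^{\times 2}(G')\le\tilde\gamma_{gr}^{\times 2}(G)\le\tilde\gamma_{gr}^{\times 2}(G')+1$. Moreover, $\tilde\gamma_{gr}^{\times 2}(G)=\tilde\gamma_{gr}^{\times 2}(G')+1$ if and only if there exists an MDNS $S'$ of $G'$ such that $v\in\widehat{S'}$, $N_{S'}^1[v]\neq\emptyset$, and $N_{S'}[x]\setminus N_{S'}^1[v]\neq\emptyset$ for every $x\in\widehat{S'}\setminus\{v\}$.
   Context: Graphs are finite, simple, undirected; $N[v]$ is the closed neighborhood; $v,v'$ are true twins if $N[v]=N[v']$. A sequence $S=(v_1,\dots,v_k)$ of distinct vertices is a double neighborhood sequence (DNS) if for each $i$ some $u\in N[v_i]$ satisfies $|\{j<i: u\in N[v_j]\}|\le 1$. An MDNS is a DNS of maximum length; $\tilde\gamma_{gr}^{\times 2}(G)$ is that length. $\widehat S$ is the set of vertices of $S$. For a DNS $S=(v_1,\dots,v_k)$: $N_S^1[v_i]=N[v_i]\setminus\bigcup_{j<i}N[v_j]$; $N_S^2[v_i]=\{w\in N[v_i]: |\{j<i: w\in N[v_j]\}|=1\}$; $N_S[v_i]=N_S^1[v_i]\cup N_S^2[v_i]$. *)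

theory Defs
  imports Main
begin

text \<open>Only edges between vertices of V matter, so the
 vertex-deleted subgraph G - v' is simply (V - {v'}, E).\<close>

definition simple_graph :: "'a set \<Rightarrow> ('a \<Rightarrow> 'a \<Rightarrow> bool) \<Rightarrow> bool" where
  "simple_graph V E \<longleftrightarrow> finite V \<and> (\<forall>x\<in>V. \<forall>y\<in>V. E x y \<longleftrightarrow> E y x) \<and> (\<forall>x\<in>V. \<not> E x x)"

definition closed_nbh :: "'a set \<Rightarrow> ('a \<Rightarrow> 'a \<Rightarrow> bool) \<Rightarrow> 'a \<Rightarrow> 'a set" where
  "closed_nbh V E v = {u \<in> V. u = v \<or> E v u}"

definition true_twins :: "'a set \<Rightarrow> ('a \<Rightarrow> 'a \<Rightarrow> bool) \<Rightarrow> 'a \<Rightarrow> 'a \<Rightarrow> bool" where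
  "true_twins V E v v' \<longleftrightarrow> v \<in> V \<and> v' \<in> V \<and> closed_nbh V E v = closed_nbh V E v'"

definition dom_count :: "'a set \<Rightarrow> ('a \<Rightarrow> 'a \<Rightarrow> bool) \<Rightarrow> 'a list \<Rightarrow> nat \<Rightarrow> 'a \<Rightarrow> nat" where
  "dom_count V E S i u = card {j. j < i \<and> u \<in> closed_nbh V E (S ! j)}"

definition is_dns :: "'a set \<Rightarrow> ('a \<Rightarrow> 'a \<Rightarrow> bool) \<Rightarrow> 'a list \<Rightarrow> bool" where
  "is_dns V E S \<longleftrightarrow> distinct S \<and> set S \<subseteq> V \<and>
     (\<forall>i < length S. \<exists>u \<in> closed_nbh V E (S ! i). dom_count V E S i u \<le> 1)"

definition gamma_gr2 :: "'a set \<Rightarrow> ('a \<Rightarrow> 'a \<Rightarrow> bool) \<Rightarrow> nat" where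
  "gamma_gr2 V E = Max (length ` {S. is_dns V E S})"

definition is_mdns :: "'a set \<Rightarrow> ('a \<Rightarrow> 'a \<Rightarrow> bool) \<Rightarrow> 'a list \<Rightarrow> bool" where
  "is_mdns V E S \<longleftrightarrow> is_dns V E S \<and> (\<forall>T. is_dns V E T \<longrightarrow> length T \<le> length S)"

text \<open>N^1_S[v_i], N^2_S[v_i], N_S[v_i] for the i-th (0-based) entry of S.\<close>
definition NS1 :: "'a set \<Rightarrow> ('a \<Rightarrow> 'a \<Rightarrow> bool) \<Rightarrow> 'a list \<Rightarrow> nat \<Rightarrow> 'a set" where
  "NS1 V E S i = closed_nbh V E (S ! i) - (\<Union>j<i. closed_nbh V E (S ! j))"

definition NS2 :: "'a set \<Rightarrow> ('a \<Rightarrow> 'a \<Rightarrow> bool) \<Rightarrow> 'a list \<Rightarrow> nat \<Rightarrow> 'a set" where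
  "NS2 V E S i = {w \<in> closed_nbh V E (S ! i). dom_count V E S i w = 1}"

definition NS :: "'a set \<Rightarrow> ('a \<Rightarrow> 'a \<Rightarrow> bool) \<Rightarrow> 'a list \<Rightarrow> nat \<Rightarrow> 'a set" where
  "NS V E S i = NS1 V E S i \<union> NS2 V E S i"

end

theory Submission
  imports Defs
begin

(* A double neighbourhood sequence only sees the closed neighbourhoods of its entries, which v and v'
   share, and v, v' lie in the same closed neighbourhoods. So a DNS of G - v' is a DNS of G, and a DNS
   of G containing at most one of the twins becomes one of G - v' after renaming v' to v.
   If a DNS of G contains both twins, delete the earlier one and rename the later one to v: the result
   is a DNS of G - v' in which v has a private neighbour and every other entry has a footprint outside
   N^1[v], because each vertex of N[v] was already dominated once by the deleted twin.
   Conversely, under these two conditions v' can be inserted directly after v: its footprint is N^1[v],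
   and a later footprint outside N^1[v] avoids N[v] altogether. *)

definition insert_nth :: "nat \<Rightarrow> 'a \<Rightarrow> 'a list \<Rightarrow> 'a list" where
  "insert_nth m y xs = take m xs @ y # drop m xs"

lemma length_insert_nth [simp]: "m \<le> length xs \<Longrightarrow> length (insert_nth m y xs) = Suc (length xs)"
  by (simp add: insert_nth_def)

lemma set_insert_nth [simp]: "set (insert_nth m y xs) = insert y (set xs)"
  unfolding insert_nth_def by (subst (2) append_take_drop_id[symmetric, of xs m]) (simp del: append_take_drop_id)

lemma distinct_insert_nth [simp]: "distinct (insert_nth m y xs) \<longleftrightarrow> y \<notin> set xs \<and> distinct xs"
proof -
  have "distinct (insert_nth m y xs) \<longleftrightarrow> distinct (y # (take m xs @ drop m xs))"
    unfolding insert_nth_def by (simp only: distinct_append distinct.simps set_append) auto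
  then show ?thesis
    by simp
qed

lemma nth_insert_nth_less: "i < m \<Longrightarrow> m \<le> length xs \<Longrightarrow> insert_nth m y xs ! i = xs ! i"
  by (simp add: insert_nth_def nth_append)

lemma nth_insert_nth_eq: "m \<le> length xs \<Longrightarrow> insert_nth m y xs ! m = y"
  by (simp add: insert_nth_def nth_append)

lemma nth_insert_nth_Suc: "m \<le> i \<Longrightarrow> i < length xs \<Longrightarrow> insert_nth m y xs ! Suc i = xs ! i"
  by (simp add: insert_nth_def nth_append)

lemma insert_nth_nth_remove: "i < length xs \<Longrightarrow> insert_nth i (xs ! i) (take i xs @ drop (Suc i) xs) = xs"
  by (simp add: insert_nth_def id_take_nth_drop[symmetric] min_def)

lemma closed_nbh_Diff: "closed_nbh (V - X) E x = closed_nbh V E x - X"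
  by (auto simp: closed_nbh_def)

lemma dom_count_cong:
  assumes "\<And>j. j < i \<Longrightarrow> closed_nbh V E (S ! j) = closed_nbh V E (T ! j)"
  shows "dom_count V E S i u = dom_count V E T i u"
  unfolding dom_count_def using assms by (intro arg_cong[where f = card] Collect_cong) auto

lemma dom_count_Suc:
  "dom_count V E S (Suc i) u = dom_count V E S i u + (if u \<in> closed_nbh V E (S ! i) then 1 else 0)"
proof -
  have "{j. j < Suc i \<and> u \<in> closed_nbh V E (S ! j)} =
      (if u \<in> closed_nbh V E (S ! i) then insert i else id) {j. j < i \<and> u \<in> closed_nbh V E (S ! j)}"
    by (auto simp: less_Suc_eq)
  then show ?thesis
    by (simp add: dom_count_def)
qed

lemma dom_count_mono: "i \<le> i' \<Longrightarrow> dom_count V E S i u \<le> dom_count V E S i' u"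
  unfolding dom_count_def by (rule card_mono) auto

lemma dom_count_pos: "j < i \<Longrightarrow> u \<in> closed_nbh V E (S ! j) \<Longrightarrow> 0 < dom_count V E S i u"
  unfolding dom_count_def by (subst card_gt_0_iff) auto

lemma dom_count_Diff: "u \<notin> X \<Longrightarrow> dom_count (V - X) E S i u = dom_count V E S i u"
  by (simp add: dom_count_def closed_nbh_Diff)

lemma dom_count_insert_nth_le:
  "i \<le> m \<Longrightarrow> m \<le> length xs \<Longrightarrow> dom_count V E (insert_nth m y xs) i u = dom_count V E xs i u"
  by (rule dom_count_cong) (simp add: nth_insert_nth_less)

lemma dom_count_insert_nth_Suc:
  assumes "m \<le> i" "i \<le> length xs"
  shows "dom_count V E (insert_nth m y xs) (Suc i) u =
    dom_count V E xs i u + (if u \<in> closed_nbh V E y then 1 else 0)"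
  using assms
proof (induction i rule: dec_induct)
  case base
  then show ?case
    by (simp add: dom_count_Suc dom_count_insert_nth_le nth_insert_nth_eq)
next
  case (step n)
  then show ?case
    by (simp add: dom_count_Suc[of V E _ "Suc n"] dom_count_Suc[of V E xs n] nth_insert_nth_Suc)
qed

lemma mem_NS1_iff:
  "u \<in> NS1 V E S i \<longleftrightarrow> u \<in> closed_nbh V E (S ! i) \<and> dom_count V E S i u = 0"
  by (auto simp: NS1_def dom_count_def card_eq_0_iff)

lemma mem_NS_iff:
  "u \<in> NS V E S i \<longleftrightarrow> u \<in> closed_nbh V E (S ! i) \<and> dom_count V E S i u \<le> 1"
  by (auto simp: NS_def NS2_def mem_NS1_iff)

lemma NS_cong:
  assumes "\<And>j. j \<le> i \<Longrightarrow> closed_nbh V E (S ! j) = closed_nbh V E (T ! j)"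
  shows "NS V E S i = NS V E T i" and "NS1 V E S i = NS1 V E T i"
proof -
  have "dom_count V E S i u = dom_count V E T i u" for u
    by (rule dom_count_cong) (simp add: assms)
  then show "NS V E S i = NS V E T i" and "NS1 V E S i = NS1 V E T i"
    using assms[of i] by (auto simp: mem_NS_iff mem_NS1_iff)
qed

lemma NS_Diff: "NS (V - X) E S i = NS V E S i - X" and NS1_Diff: "NS1 (V - X) E S i = NS1 V E S i - X"
  by (auto simp: mem_NS_iff mem_NS1_iff closed_nbh_Diff dom_count_Diff)

lemma is_dns_iff_NS:
  "is_dns V E S \<longleftrightarrow> distinct S \<and> set S \<subseteq> V \<and> (\<forall>i < length S. NS V E S i \<noteq> {})"
  unfolding is_dns_def ex_in_conv[symmetric] mem_NS_iff by blast

lemma finite_dns: "finite V \<Longrightarrow> finite {S. is_dns V E S}"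
proof -
  assume "finite V"
  have "{S. is_dns V E S} \<subseteq> {xs. set xs \<subseteq> V \<and> length xs \<le> card V}"
    by (auto simp: is_dns_def \<open>finite V\<close> card_mono simp flip: distinct_card)
  then show ?thesis
    using finite_lists_length_le[OF \<open>finite V\<close>] by (rule finite_subset)
qed

lemma length_le_gamma: "finite V \<Longrightarrow> is_dns V E S \<Longrightarrow> length S \<le> gamma_gr2 V E"
  unfolding gamma_gr2_def by (rule Max_ge) (auto simp: finite_dns)

lemma gamma_attained:
  assumes "finite V"
  obtains S where "is_dns V E S" "length S = gamma_gr2 V E"
proof -
  have "is_dns V E []"
    by (simp add: is_dns_def)
  then have "gamma_gr2 V E \<in> length ` {S. is_dns V E S}"
    unfolding gamma_gr2_def using finite_dns[OF assms] by (intro Max_in) auto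
  then show ?thesis
    using that by auto
qed

lemma is_mdns_iff: "finite V \<Longrightarrow> is_mdns V E S \<longleftrightarrow> is_dns V E S \<and> length S = gamma_gr2 V E"
  by (metis gamma_attained is_mdns_def le_antisym length_le_gamma)

lemma is_dns_Diff: "is_dns (V - X) E S \<Longrightarrow> is_dns V E S"
  by (auto simp: is_dns_iff_NS NS_Diff)

lemma gamma_Diff_le: "finite V \<Longrightarrow> gamma_gr2 (V - X) E \<le> gamma_gr2 V E"
  by (metis finite_Diff gamma_attained is_dns_Diff length_le_gamma)

lemma NS_list_update:
  assumes "q < length S" "i < length S" "closed_nbh V E x = closed_nbh V E (S ! q)"
  shows "NS V E (S[q := x]) i = NS V E S i" and "NS1 V E (S[q := x]) i = NS1 V E S i"
  by (rule NS_cong; use assms in \<open>simp add: nth_list_update\<close>)+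

lemma is_dns_list_update:
  assumes "is_dns V E S" "q < length S" "x \<in> V" "x \<notin> set S - {S ! q}"
    and "closed_nbh V E x = closed_nbh V E (S ! q)"
  shows "is_dns V E (S[q := x])"
  using assms set_update_subset_insert[of S q x]
  by (auto simp: is_dns_iff_NS distinct_list_update NS_list_update)

lemma mem_NS_insert_nth:
  assumes "m \<le> length xs" "i < length xs"
    and "u \<in> NS V E (insert_nth m y xs) (if i < m then i else Suc i)"
  shows "u \<in> NS V E xs i"
proof (cases "i < m")
  case True
  then show ?thesis
    using assms by (simp add: mem_NS_iff nth_insert_nth_less dom_count_insert_nth_le)
next
  case False
  then show ?thesis
    using assms by (auto simp: mem_NS_iff nth_insert_nth_Suc dom_count_insert_nth_Suc)
qed

lemma is_dns_insert_nth_D: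
  assumes "is_dns V E (insert_nth m y xs)" "m \<le> length xs"
  shows "is_dns V E xs"
  unfolding is_dns_iff_NS
proof (intro conjI allI impI)
  show "distinct xs" "set xs \<subseteq> V"
    using assms by (auto simp: is_dns_iff_NS)
  fix i
  assume "i < length xs"
  moreover have "NS V E (insert_nth m y xs) (if i < m then i else Suc i) \<noteq> {}"
    using assms \<open>i < length xs\<close> by (simp add: is_dns_iff_NS)
  ultimately show "NS V E xs i \<noteq> {}"
    using mem_NS_insert_nth[OF assms(2)] by blast
qed

definition twin_extendable :: "'a set \<Rightarrow> ('a \<Rightarrow> 'a \<Rightarrow> bool) \<Rightarrow> 'a list \<Rightarrow> nat \<Rightarrow> bool" where
  "twin_extendable V E S k \<longleftrightarrow>
     NS1 V E S k \<noteq> {} \<and> (\<forall>i < length S. i \<noteq> k \<longrightarrow> NS V E S i - NS1 V E S k \<noteq> {})"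

lemma twin_extendable_if_dns_insert_nth:
  assumes dns: "is_dns V E (insert_nth a y D)" and "a \<le> k" "k < length D"
    and same_nbh: "closed_nbh V E y = closed_nbh V E (D ! k)"
  shows "twin_extendable V E D k"
  unfolding twin_extendable_def
proof (intro conjI allI impI)
  let ?S = "insert_nth a y D"
  have a: "a \<le> length D"
    using assms by simp
  have NS_S: "NS V E ?S j \<noteq> {}" if "j < Suc (length D)" for j
    using dns that a by (simp add: is_dns_iff_NS)
  have count_after: "dom_count V E ?S (Suc j) u = dom_count V E D j u + 1"
    if "a \<le> j" "j \<le> length D" "u \<in> closed_nbh V E (D ! k)" for j u
    using dom_count_insert_nth_Suc[OF that(1,2)] that(3) same_nbh by simp
  obtain u where u: "u \<in> NS V E ?S (Suc k)"
    using NS_S[of "Suc k"] \<open>k < length D\<close> by blast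
  then have "u \<in> closed_nbh V E (D ! k)"
    using assms by (simp add: mem_NS_iff nth_insert_nth_Suc)
  then have "u \<in> NS1 V E D k"
    using u count_after[of k u] assms by (auto simp: mem_NS_iff mem_NS1_iff)
  then show "NS1 V E D k \<noteq> {}"
    by blast
  fix i
  assume i: "i < length D" "i \<noteq> k"
  obtain w where w: "w \<in> NS V E ?S (if i < a then i else Suc i)"
    using NS_S[of "if i < a then i else Suc i"] i by fastforce
  then have w_D: "w \<in> NS V E D i"
    using mem_NS_insert_nth[OF a i(1)] by blast
  have "w \<notin> NS1 V E D k"
  proof
    assume w_private: "w \<in> NS1 V E D k"
    show False
    proof (cases "i < k")
      case True
      then show False
        using w_D w_private dom_count_pos[OF True, of w V E D] by (simp add: mem_NS_iff mem_NS1_iff)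
    next
      case False
      then have "k < i" "a \<le> i"
        using i \<open>a \<le> k\<close> by auto
      have "w \<in> closed_nbh V E (D ! k)"
        using w_private by (simp add: mem_NS1_iff)
      then have "0 < dom_count V E D i w" and "dom_count V E ?S (Suc i) w = dom_count V E D i w + 1"
        using dom_count_pos[OF \<open>k < i\<close>] count_after[OF \<open>a \<le> i\<close>] i by auto
      then show False
        using w \<open>a \<le> i\<close> by (simp add: mem_NS_iff)
    qed
  qed
  then show "NS V E D i - NS1 V E D k \<noteq> {}"
    using w_D by blast
qed

lemma is_dns_insert_nth_twin:
  assumes dns: "is_dns V E S" and k: "k < length S" and y: "y \<in> V" "y \<notin> set S"
    and same_nbh: "closed_nbh V E y = closed_nbh V E (S ! k)"
    and ext: "twin_extendable V E S k"
  shows "is_dns V E (insert_nth (Suc k) y S)"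
  unfolding is_dns_iff_NS
proof (intro conjI allI impI)
  let ?T = "insert_nth (Suc k) y S"
  show "distinct ?T" "set ?T \<subseteq> V"
    using dns y by (auto simp: is_dns_iff_NS)
  fix i
  assume "i < length ?T"
  then have i: "i < Suc (length S)"
    using k by simp
  consider "i < Suc k" | "i = Suc k" | j where "i = Suc j" "Suc k \<le> j" "j < length S"
    using i by (metis linorder_neqE_nat less_Suc_eq_0_disj less_Suc_eq_le)
  then show "NS V E ?T i \<noteq> {}"
  proof cases
    case 1
    then have "NS V E ?T i = NS V E S i"
      using k by (intro NS_cong) (simp add: nth_insert_nth_less)
    then show ?thesis
      using dns 1 k by (simp add: is_dns_iff_NS)
  next
    case 2
    obtain u where "u \<in> NS1 V E S k"
      using ext by (auto simp: twin_extendable_def)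
    then have "u \<in> NS V E ?T (Suc k)"
      using k same_nbh
      by (simp add: mem_NS1_iff mem_NS_iff nth_insert_nth_eq dom_count_insert_nth_le dom_count_Suc)
    then show ?thesis
      using 2 by blast
  next
    case 3
    have "NS V E S j - NS1 V E S k \<noteq> {}"
      using ext 3 by (simp add: twin_extendable_def)
    then obtain w where w: "w \<in> NS V E S j" "w \<notin> NS1 V E S k"
      by blast
    have "w \<notin> closed_nbh V E y"
    proof
      assume "w \<in> closed_nbh V E y"
      then have "dom_count V E S (Suc k) w = dom_count V E S k w + 1"
        using same_nbh by (simp add: dom_count_Suc)
      moreover have "dom_count V E S (Suc k) w \<le> dom_count V E S j w"
        using 3 by (intro dom_count_mono)
      ultimately show False
        using w \<open>w \<in> closed_nbh V E y\<close> same_nbh by (simp add: mem_NS_iff mem_NS1_iff)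
    qed
    then have "w \<in> NS V E ?T i"
      using w 3 k by (simp add: mem_NS_iff nth_insert_nth_Suc dom_count_insert_nth_Suc)
    then show ?thesis
      by blast
  qed
qed

lemma twin_extendable_list_update:
  assumes "q < length S" "k < length S" "closed_nbh V E x = closed_nbh V E (S ! q)"
  shows "twin_extendable V E (S[q := x]) k \<longleftrightarrow> twin_extendable V E S k"
  using assms by (simp add: twin_extendable_def NS_list_update)

lemma closed_nbh_sym:
  "simple_graph V E \<Longrightarrow> x \<in> V \<Longrightarrow> y \<in> V \<Longrightarrow> x \<in> closed_nbh V E y \<longleftrightarrow> y \<in> closed_nbh V E x"
  by (auto simp: simple_graph_def closed_nbh_def)

locale true_twin_pair =
  fixes V :: "'a set" and E :: "'a \<Rightarrow> 'a \<Rightarrow> bool" and v v' :: 'a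
  assumes simple: "simple_graph V E" and twins: "true_twins V E v v'" and twins_distinct: "v \<noteq> v'"
begin

lemma finite_V: "finite V"
  using simple by (simp add: simple_graph_def)

lemma twins_in_V: "v \<in> V" "v' \<in> V"
  using twins by (simp_all add: true_twins_def)

lemma closed_nbh_twins: "closed_nbh V E v' = closed_nbh V E v"
  using twins by (simp add: true_twins_def)

lemma twin_mem_closed_nbh_iff: "x \<in> V \<Longrightarrow> v' \<in> closed_nbh V E x \<longleftrightarrow> v \<in> closed_nbh V E x"
  using closed_nbh_sym[OF simple] twins_in_V closed_nbh_twins by metis

lemma twin_mem_NS_iff:
  assumes "set S \<subseteq> V" "i < length S"
  shows "v' \<in> NS V E S i \<longleftrightarrow> v \<in> NS V E S i" and "v' \<in> NS1 V E S i \<longleftrightarrow> v \<in> NS1 V E S i"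
proof -
  have S_in_V: "S ! j \<in> V" if "j \<le> i" for j
    using assms that by (simp add: subset_iff)
  have "dom_count V E S i v' = dom_count V E S i v"
    unfolding dom_count_def using S_in_V twin_mem_closed_nbh_iff by (metis less_imp_le)
  then show "v' \<in> NS V E S i \<longleftrightarrow> v \<in> NS V E S i" and "v' \<in> NS1 V E S i \<longleftrightarrow> v \<in> NS1 V E S i"
    using S_in_V[of i] twin_mem_closed_nbh_iff by (simp_all add: mem_NS_iff mem_NS1_iff)
qed

lemma is_dns_Diff_twin_iff: "is_dns (V - {v'}) E S \<longleftrightarrow> is_dns V E S \<and> v' \<notin> set S"
proof -
  have "NS V E S i - {v'} \<noteq> {} \<longleftrightarrow> NS V E S i \<noteq> {}" if "set S \<subseteq> V" "i < length S" for i
    using twin_mem_NS_iff(1)[OF that] twins_distinct by blast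
  then show ?thesis
    by (auto simp: is_dns_iff_NS NS_Diff)
qed

lemma twin_extendable_Diff_twin_iff:
  assumes "set S \<subseteq> V" "k < length S"
  shows "twin_extendable (V - {v'}) E S k \<longleftrightarrow> twin_extendable V E S k"
  using twin_mem_NS_iff[OF assms(1)] assms(2) twins_distinct
  unfolding twin_extendable_def NS_Diff NS1_Diff by blast

lemma length_le_gamma_Diff_if_not_both:
  assumes dns: "is_dns V E S" and not_both: "\<not> (v \<in> set S \<and> v' \<in> set S)"
  shows "length S \<le> gamma_gr2 (V - {v'}) E"
proof (cases "v' \<in> set S")
  case False
  then show ?thesis
    using dns finite_V by (simp add: is_dns_Diff_twin_iff length_le_gamma)
next
  case True
  then obtain q where q: "q < length S" "S ! q = v'"
    by (auto simp: in_set_conv_nth)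
  have "distinct S" "v \<notin> set S"
    using dns not_both True by (auto simp: is_dns_def)
  then have "is_dns V E (S[q := v])" and "v' \<notin> set (S[q := v])"
    using dns q twins_in_V closed_nbh_twins twins_distinct
    by (auto simp: is_dns_list_update set_update_distinct)
  then show ?thesis
    using finite_V by (metis finite_Diff is_dns_Diff_twin_iff length_le_gamma length_list_update)
qed

lemma dns_delete_earlier_twin:
  assumes dns: "is_dns V E S" and "v \<in> set S" "v' \<in> set S"
  obtains S' k where "is_dns (V - {v'}) E S'" "length S' = length S - 1" "k < length S'"
    "S' ! k = v" "twin_extendable (V - {v'}) E S' k"
proof -
  obtain a b where ab: "a < b" "b < length S" "{S ! a, S ! b} = {v, v'}"
    using assms twins_distinct
    by (auto simp: in_set_conv_nth) (metis insert_commute linorder_neqE_nat)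
  define D where "D = take a S @ drop (Suc a) S"
  define k where "k = b - 1"
  have S_eq: "insert_nth a (S ! a) D = S"
    unfolding D_def using ab by (simp add: insert_nth_nth_remove)
  have k: "a \<le> k" "k < length D" "length D = length S - 1"
    using ab by (auto simp: D_def k_def)
  have Dk: "D ! k = S ! b"
    using S_eq k ab nth_insert_nth_Suc[of a k D "S ! a"] by (simp add: k_def)
  have twin_nbhs: "closed_nbh V E (S ! a) = closed_nbh V E v" "closed_nbh V E (D ! k) = closed_nbh V E v"
    using ab(3) Dk closed_nbh_twins by (auto simp: doubleton_eq_iff)
  have dns_D: "is_dns V E D"
    using is_dns_insert_nth_D[of V E a "S ! a" D] dns S_eq k by simp
  have ext_D: "twin_extendable V E D k"
    using twin_extendable_if_dns_insert_nth[of V E a "S ! a" D k] dns S_eq k twin_nbhs by simp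
  have "S ! a \<notin> set D"
    using dns S_eq distinct_insert_nth by (metis is_dns_def)
  moreover have "distinct D" "set D \<subseteq> V"
    using dns_D by (simp_all add: is_dns_def)
  ultimately have "v \<notin> set D - {D ! k}" "v' \<notin> set (D[k := v])"
    using ab(3) Dk k twins_distinct by (auto simp: set_update_distinct doubleton_eq_iff)
  have dns': "is_dns V E (D[k := v])"
    using dns_D k twins_in_V twin_nbhs \<open>v \<notin> set D - {D ! k}\<close> by (intro is_dns_list_update) auto
  have ext': "twin_extendable V E (D[k := v]) k"
    using ext_D k twin_nbhs by (simp add: twin_extendable_list_update)
  show ?thesis
  proof (rule that)
    show "is_dns (V - {v'}) E (D[k := v])"
      using dns' \<open>v' \<notin> set (D[k := v])\<close> is_dns_Diff_twin_iff by blast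
    show "twin_extendable (V - {v'}) E (D[k := v]) k"
      using ext' dns' k twin_extendable_Diff_twin_iff[of "D[k := v]" k] by (simp add: is_dns_def)
  qed (use k in auto)
qed

lemma is_dns_insert_twin_after:
  assumes dns: "is_dns (V - {v'}) E S" and k: "k < length S" "S ! k = v"
    and ext: "twin_extendable (V - {v'}) E S k"
  shows "is_dns V E (insert_nth (Suc k) v' S)"
proof -
  have "is_dns V E S" "v' \<notin> set S"
    using dns is_dns_Diff_twin_iff by blast+
  moreover have "set S \<subseteq> V"
    using dns by (auto simp: is_dns_def)
  ultimately show ?thesis
    using k ext twins_in_V closed_nbh_twins
    by (intro is_dns_insert_nth_twin) (auto simp: twin_extendable_Diff_twin_iff)
qed

lemma gamma_le_Suc_gamma_Diff: "gamma_gr2 V E \<le> gamma_gr2 (V - {v'}) E + 1"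
proof -
  obtain S where S: "is_dns V E S" "length S = gamma_gr2 V E"
    using gamma_attained[OF finite_V] .
  show ?thesis
  proof (cases "v \<in> set S \<and> v' \<in> set S")
    case True
    then obtain S' where "is_dns (V - {v'}) E S'" "length S' = length S - 1"
      using dns_delete_earlier_twin[OF S(1)] by blast
    then show ?thesis
      using S(2) finite_V length_le_gamma[of "V - {v'}" E S'] by simp
  next
    case False
    then show ?thesis
      using S length_le_gamma_Diff_if_not_both by fastforce
  qed
qed

lemma gamma_eq_Suc_gamma_Diff_iff:
  "gamma_gr2 V E = gamma_gr2 (V - {v'}) E + 1 \<longleftrightarrow>
    (\<exists>S. is_mdns (V - {v'}) E S \<and> (\<exists>k < length S. S ! k = v \<and> twin_extendable (V - {v'}) E S k))"
proof
  assume gamma_eq: "gamma_gr2 V E = gamma_gr2 (V - {v'}) E + 1"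
  obtain S where S: "is_dns V E S" "length S = gamma_gr2 V E"
    using gamma_attained[OF finite_V] .
  then have "v \<in> set S" "v' \<in> set S"
    using length_le_gamma_Diff_if_not_both gamma_eq by fastforce+
  then obtain S' k where "is_dns (V - {v'}) E S'" "length S' = length S - 1" "k < length S'"
    "S' ! k = v" "twin_extendable (V - {v'}) E S' k"
    using dns_delete_earlier_twin[OF S(1)] by blast
  moreover have "is_mdns (V - {v'}) E S'"
    using S(2) gamma_eq finite_V \<open>is_dns (V - {v'}) E S'\<close> \<open>length S' = length S - 1\<close>
    by (simp add: is_mdns_iff)
  ultimately show "\<exists>S. is_mdns (V - {v'}) E S \<and> (\<exists>k < length S. S ! k = v \<and> twin_extendable (V - {v'}) E S k)"
    by blast
next
  assume "\<exists>S. is_mdns (V - {v'}) E S \<and> (\<exists>k < length S. S ! k = v \<and> twin_extendable (V - {v'}) E S k)"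
  then obtain S k where S: "is_mdns (V - {v'}) E S" "k < length S" "S ! k = v"
    "twin_extendable (V - {v'}) E S k"
    by blast
  then have "is_dns V E (insert_nth (Suc k) v' S)" "length S = gamma_gr2 (V - {v'}) E"
    using is_dns_insert_twin_after finite_V by (auto simp: is_mdns_iff)
  then have "gamma_gr2 (V - {v'}) E + 1 \<le> gamma_gr2 V E"
    using length_le_gamma[OF finite_V] S(2) by fastforce
  then show "gamma_gr2 V E = gamma_gr2 (V - {v'}) E + 1"
    using gamma_le_Suc_gamma_Diff by simp
qed

end

theorem proposition5:
  fixes V :: "'a set" and E :: "'a \<Rightarrow> 'a \<Rightarrow> bool" and v v' :: 'a
  assumes "simple_graph V E"
    and "true_twins V E v v'"
    and "v \<noteq> v'"
  shows "gamma_gr2 (V - {v'}) E \<le> gamma_gr2 V E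
       \<and> gamma_gr2 V E \<le> gamma_gr2 (V - {v'}) E + 1
       \<and> (gamma_gr2 V E = gamma_gr2 (V - {v'}) E + 1 \<longleftrightarrow>
          (\<exists>S'. is_mdns (V - {v'}) E S' \<and>
            (\<exists>k < length S'. S' ! k = v \<and> NS1 (V - {v'}) E S' k \<noteq> {} \<and>
               (\<forall>i < length S'. S' ! i \<noteq> v \<longrightarrow>
                  NS (V - {v'}) E S' i - NS1 (V - {v'}) E S' k \<noteq> {}))))"
proof -
  interpret true_twin_pair V E v v'
    using assms by unfold_locales
  have "(\<exists>k < length S. S ! k = v \<and> twin_extendable (V - {v'}) E S k) \<longleftrightarrow>
      (\<exists>k < length S. S ! k = v \<and> NS1 (V - {v'}) E S k \<noteq> {} \<and>
         (\<forall>i < length S. S ! i \<noteq> v \<longrightarrow> NS (V - {v'}) E S i - NS1 (V - {v'}) E S k \<noteq> {}))"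
    if "is_mdns (V - {v'}) E S" for S
    using that by (auto simp: is_mdns_def is_dns_def twin_extendable_def nth_eq_iff_index_eq)
  then show ?thesis
    using gamma_Diff_le[OF finite_V] gamma_le_Suc_gamma_Diff gamma_eq_Suc_gamma_Diff_iff by blast
qed

end
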